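(* Let $\vec p,\vec s$ be $n$-tuples with entries in $[1,\infty]$ and let $\alpha$ satisfy $0\le\frac1n\sum_{i=1}^n\frac1{s_i}\le\frac1\alpha\le\frac1n\sum_{i=1}^n\frac1{p_i}<1$. Then there is a constant $C>0$ such that for every ball $B(x_0,r_0)\subset\mathbb R^n$, $$\|\chi_{B(x_0,r_0)}\|_{(L^{\vec p},L^{\vec s})^{\alpha}}\le C\,r_0^{n/\alpha}\quad\text{and}\quad\|\chi_{B(x_0,r_0)}\|_{\mathcal H(\vec p\,',\vec s\,',\alpha')}\le C\,r_0^{n/\alpha'}.$$
   Context: For $\vec p=(p_1,\dots,p_n)$, $\|f\|_{L^{\vec p}}=\Big(\int_{\mathbb R}\cdots\Big(\int_{\mathbb R}|f(x)|^{p_1}\,dx_1\Big)^{p_2/p_1}\cdots dx_n\Big)^{1/p_n}$ (usual modification when some exponent is $\infty$); primes denote conjugate exponents ($1/p_i+1/p_i'=1$, $1/\alpha+1/\alpha'=1$). $B(y,r)$ is the open ball of center $y$, radius $r$, $\chi_E$ the characteristic function of $E$. $\|f\|_{(L^{\vec p},L^{\vec s})^{\alpha}}:=\sup_{r>0}\Big\|\,y\mapsto |B(y,r)|^{\frac1\alpha-\frac1n\sum_{i}\frac1{p_i}-\frac1n\sum_{i}\frac1{s_i}}\|f\chi_{B(y,r)}\|_{L^{\vec p}}\Big\|_{L^{\vec s}}$ (outer norm in $y$). For $k\in\mathbb Z^n$ let $Q_{1,k}=k+[0,1)^n$, $\|\{a_k\}\|_{\ell^{\vec s}}=\Big(\sum_{k_n}\cdots\Big(\sum_{k_1}|a_k|^{s_1}\Big)^{s_2/s_1}\cdots\Big)^{1/s_n}$,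 and $\|f\|_{\vec p\,',\vec s\,'}=\big\|\{\|f\chi_{Q_{1,k}}\|_{L^{\vec p\,'}}\}_k\big\|_{\ell^{\vec s\,'}}$; $(L^{\vec p\,'},\ell^{\vec s\,'})(\mathbb R^n)$ is the set of $f\in L^1_{loc}$ with $\|f\|_{\vec p\,',\vec s\,'}<\infty$. For $r>0$, $St^{(\alpha')}_rf(x)=r^{-n/\alpha'}f(x/r)$. $\mathcal H(\vec p\,',\vec s\,',\alpha')$ is the set of $f\in L^1_{loc}(\mathbb R^n)$ admitting a sequence $\{(c_j,r_j,f_j)\}_{j\ge1}\subset\mathbb C\times(0,\infty)\times(L^{\vec p\,'},\ell^{\vec s\,'})(\mathbb R^n)$ with $f=\sum_jc_jSt^{(\alpha')}_{r_j}(f_j)$ in $L^1_{loc}$, $\|f_j\|_{\vec p\,',\vec s\,'}\le1$, and $\sum_j|c_j|<\infty$; $\|f\|_{\mathcal H(\vec p\,',\vec s\,',\alpha')}$ is the infimum of $\sum_j|c_j|$ over all such sequences. *)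

theory Defs
  imports "HOL-Analysis.Analysis"
begin

text \<open>Points of R^n are represented as functions nat => real whose coordinates
  0,...,n-1 are x_1,...,x_n and whose coordinates >= n vanish.  Exponents in [1,inf]
  are extended nonnegative reals (ennreal); 1/p is taken in ennreal (1/inf = 0).\<close>

definition Rn :: "nat \<Rightarrow> (nat \<Rightarrow> real) set" where
  "Rn n = {x. \<forall>i\<ge>n. x i = 0}"

definition Zn :: "nat \<Rightarrow> (nat \<Rightarrow> int) set" where
  "Zn n = {k. \<forall>i\<ge>n. k i = 0}"

definition rinv :: "ennreal \<Rightarrow> real" where
  "rinv q = enn2real (inverse q)"

definition conj_exp :: "ennreal \<Rightarrow> ennreal" where
  "conj_exp q = inverse (1 - inverse q)"

definition epow :: "ennreal \<Rightarrow> real \<Rightarrow> ennreal" where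
  "epow x a = (if x = \<infinity> then \<infinity> else ennreal (enn2real x powr a))"

definition ess_sup_enn :: "'a measure \<Rightarrow> ('a \<Rightarrow> ennreal) \<Rightarrow> ennreal" where
  "ess_sup_enn M g = Inf {c. AE t in M. g t \<le> c}"

definition lq_norm :: "'a measure \<Rightarrow> ennreal \<Rightarrow> ('a \<Rightarrow> ennreal) \<Rightarrow> ennreal" where
  "lq_norm M q g = (if q = \<infinity> then ess_sup_enn M g
     else epow (\<integral>\<^sup>+ t. epow (g t) (enn2real q) \<partial>M) (1 / enn2real q))"

text \<open>Iterated (mixed) norm: level k has integrated out the variables 0..k-1,
  variable i with exponent q i, innermost first.\<close>
fun iter_norm :: "'a measure \<Rightarrow> (nat \<Rightarrow> ennreal) \<Rightarrow> nat \<Rightarrow> ((nat \<Rightarrow> 'a) \<Rightarrow> ennreal)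
                    \<Rightarrow> (nat \<Rightarrow> 'a) \<Rightarrow> ennreal" where
  "iter_norm M q 0 g x = g x"
| "iter_norm M q (Suc k) g x = lq_norm M (q k) (\<lambda>t. iter_norm M q k g (x(k := t)))"

definition mixed_Lp_enn :: "nat \<Rightarrow> (nat \<Rightarrow> ennreal) \<Rightarrow> ((nat \<Rightarrow> real) \<Rightarrow> ennreal) \<Rightarrow> ennreal" where
  "mixed_Lp_enn n p g = iter_norm lborel p n g (\<lambda>_. 0)"

definition mixed_Lp_norm :: "nat \<Rightarrow> (nat \<Rightarrow> ennreal) \<Rightarrow> ((nat \<Rightarrow> real) \<Rightarrow> complex) \<Rightarrow> ennreal" where
  "mixed_Lp_norm n p f = mixed_Lp_enn n p (\<lambda>x. ennreal (norm (f x)))"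

definition mixed_lseq_norm :: "nat \<Rightarrow> (nat \<Rightarrow> ennreal) \<Rightarrow> ((nat \<Rightarrow> int) \<Rightarrow> ennreal) \<Rightarrow> ennreal" where
  "mixed_lseq_norm n s a = iter_norm (count_space UNIV) s n a (\<lambda>_. 0)"

text \<open>Lebesgue measure on R^n (via Tonelli as an iterated integral)\<close>
definition vol :: "nat \<Rightarrow> (nat \<Rightarrow> real) set \<Rightarrow> ennreal" where
  "vol n E = mixed_Lp_enn n (\<lambda>_. 1) (indicator E)"

definition balln :: "nat \<Rightarrow> (nat \<Rightarrow> real) \<Rightarrow> real \<Rightarrow> (nat \<Rightarrow> real) set" where
  "balln n y r = {x \<in> Rn n. sqrt (\<Sum>i<n. (x i - y i)\<^sup>2) < r}"

definition cube1 :: "nat \<Rightarrow> (nat \<Rightarrow> int) \<Rightarrow> (nat \<Rightarrow> real) set" where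
  "cube1 n k = {x \<in> Rn n. \<forall>i<n. of_int (k i) \<le> x i \<and> x i < of_int (k i) + 1}"

text \<open>The norm of \<open>(L^p, L^s)^\<alpha>\<close> (outer mixed L^s norm in the centre y)\<close>
definition morrey_norm :: "nat \<Rightarrow> (nat \<Rightarrow> ennreal) \<Rightarrow> (nat \<Rightarrow> ennreal) \<Rightarrow> ennreal
                            \<Rightarrow> ((nat \<Rightarrow> real) \<Rightarrow> complex) \<Rightarrow> ennreal" where
  "morrey_norm n p s \<alpha> f = (SUP r\<in>{0<..}.
     mixed_Lp_enn n s (\<lambda>y.
        ennreal (enn2real (vol n (balln n y r)) powr
            (rinv \<alpha> - (\<Sum>i<n. rinv (p i)) / n - (\<Sum>i<n. rinv (s i)) / n))
        * mixed_Lp_norm n p (\<lambda>x. f x * indicator (balln n y r) x)))"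

text \<open>locally integrable functions on R^n (Lebesgue measurable = Borel measurable
  w.r.t. the product of Lebesgue-Borel measures, plus finite integral on every ball)\<close>
definition loc_int :: "nat \<Rightarrow> ((nat \<Rightarrow> real) \<Rightarrow> complex) \<Rightarrow> bool" where
  "loc_int n f \<longleftrightarrow>
     (\<lambda>x. f (\<lambda>i. if i < n then x i else 0)) \<in> borel_measurable (PiM {..<n} (\<lambda>_. lborel))
   \<and> (\<forall>y r. mixed_Lp_norm n (\<lambda>_. 1) (\<lambda>x. f x * indicator (balln n y r) x) < \<infinity>)"

definition l1loc_tendsto :: "nat \<Rightarrow> (nat \<Rightarrow> (nat \<Rightarrow> real) \<Rightarrow> complex) \<Rightarrow> ((nat \<Rightarrow> real) \<Rightarrow> complex) \<Rightarrow> bool" where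
  "l1loc_tendsto n S f \<longleftrightarrow> (\<forall>y r.
     ((\<lambda>N. mixed_Lp_norm n (\<lambda>_. 1) (\<lambda>x. (S N x - f x) * indicator (balln n y r) x))
        \<longlongrightarrow> 0) sequentially)"

definition amalgam_norm :: "nat \<Rightarrow> (nat \<Rightarrow> ennreal) \<Rightarrow> (nat \<Rightarrow> ennreal)
                             \<Rightarrow> ((nat \<Rightarrow> real) \<Rightarrow> complex) \<Rightarrow> ennreal" where
  "amalgam_norm n p s f =
     mixed_lseq_norm n s (\<lambda>k. mixed_Lp_norm n p (\<lambda>x. f x * indicator (cube1 n k) x))"

definition St :: "nat \<Rightarrow> ennreal \<Rightarrow> real \<Rightarrow> ((nat \<Rightarrow> real) \<Rightarrow> complex) \<Rightarrow> (nat \<Rightarrow> real) \<Rightarrow> complex" where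
  "St n a r f x = complex_of_real (r powr (- (real n * rinv a))) * f (\<lambda>i. x i / r)"

text \<open>norm of \<open>\<H>(p, s, a)\<close> (infimum over admissible decompositions; \<infinity> if none)\<close>
definition H_norm :: "nat \<Rightarrow> (nat \<Rightarrow> ennreal) \<Rightarrow> (nat \<Rightarrow> ennreal) \<Rightarrow> ennreal
                       \<Rightarrow> ((nat \<Rightarrow> real) \<Rightarrow> complex) \<Rightarrow> ennreal" where
  "H_norm n p s a f = Inf {ennreal (\<Sum>j. norm (c j)) | c r g.
      summable (\<lambda>j. norm (c j))
    \<and> (\<forall>j. 0 < r j \<and> loc_int n (g j) \<and> amalgam_norm n p s (g j) \<le> 1)
    \<and> l1loc_tendsto n (\<lambda>N x. \<Sum>j<N. c j * St n a (r j) (g j) x) f}"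

end

theory Submission
  imports Defs
begin

(* Every estimate is an instance of one box bound: a function bounded by b and vanishing
   outside a product of sets of measures L_i has iterated L^q norm at most b * prod L_i^(1/q_i).

   Morrey part: fix the radius r and put e = 1/alpha - (sum 1/p_i)/n - (sum 1/s_i)/n <= 0.
   B(y,r) contains a cube of side 2r/n, and the intersection of B(x0,r0) and B(y,r) lies in
   a cube of side 2 min(r,r0); so the integrand in y is at most
   (2r/n)^(ne) (2 min(r,r0))^(sum 1/p_i), and it vanishes unless y lies in the cube of side
   2(r+r0) around x0, which contributes (2(r+r0))^(sum 1/s_i).  The constraints
   sum 1/s_i <= n/alpha <= sum 1/p_i bound the product by C r0^(n/alpha), separately for
   r <= r0 and r >= r0.

   H part: the indicator of B(x0,r0) is a single term c St_r0 g, where g is a multiple of the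
   indicator of the unit ball around x0/r0.  That ball meets only the 3^n unit cubes around
   floor(x0/r0), so g can be normalised in the amalgam norm with
   |c| = 3^(sum 1/s_i') r0^(n/alpha'). *)

lemma rinv_nonneg: "0 \<le> rinv q"
  by (simp add: rinv_def)

lemma rinv_eq_inverse_enn2real: "q \<noteq> \<infinity> \<Longrightarrow> rinv q = 1 / enn2real q"
proof (cases q rule: ennreal_cases)
  case (real r)
  then show ?thesis by (cases "r = 0") (auto simp: rinv_def inverse_ennreal inverse_eq_divide)
qed simp

lemma one_le_conj_exp: "1 \<le> conj_exp q"
  unfolding conj_exp_def
  by (metis (no_types, lifting) diff_le_self_ennreal divide_ennreal_def
    divide_right_mono_ennreal dual_order.strict_trans2 ennreal_divide_self
    ennreal_inverse_positive ennreal_one_less_top leD mult_1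
    one_divide_one_divide_ennreal top_greatest)

lemma epow_0 [simp]: "epow 0 a = 0"
  by (simp add: epow_def)

lemma lq_norm_zero [simp]: "lq_norm M q (\<lambda>_. 0) = 0"
proof -
  have "ess_sup_enn M (\<lambda>_. 0) \<le> 0"
    unfolding ess_sup_enn_def by (rule Inf_lower) simp
  then show ?thesis by (simp add: lq_norm_def)
qed

lemma iter_norm_zero [simp]: "iter_norm M q k (\<lambda>_. 0) x = 0"
  by (induction k arbitrary: x) simp_all

lemma mixed_Lp_norm_zero [simp]: "mixed_Lp_norm n p (\<lambda>_. 0) = 0"
  by (simp add: mixed_Lp_norm_def mixed_Lp_enn_def)

lemma ex_neq_0_if_mixed_Lp_norm_neq_0:
  assumes "mixed_Lp_norm n p f \<noteq> 0"
  shows "\<exists>x. f x \<noteq> 0"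
proof (rule ccontr)
  assume "\<nexists>x. f x \<noteq> 0"
  then have "f = (\<lambda>_. 0)" by auto
  with assms show False by simp
qed

lemma lq_norm_1: "lq_norm M 1 h = (\<integral>\<^sup>+ t. h t \<partial>M)"
proof -
  have "epow y 1 = y" for y
    by (cases y) (auto simp: epow_def)
  then show ?thesis by (simp add: lq_norm_def)
qed

lemma lq_norm_le_bounded_support:
  fixes h :: "'a \<Rightarrow> ennreal"
  assumes q: "1 \<le> q" and A: "A \<in> sets M" and L: "0 < L" "emeasure M A \<le> ennreal L"
    and B: "0 \<le> B" and hB: "\<And>t. h t \<le> ennreal B" and hA: "\<And>t. h t \<noteq> 0 \<Longrightarrow> t \<in> A"
  shows "lq_norm M q h \<le> ennreal (B * L powr rinv q)"
proof (cases "q = \<infinity>")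
  case True
  have "ess_sup_enn M h \<le> ennreal B"
    unfolding ess_sup_enn_def by (rule Inf_lower) (simp add: hB)
  then show ?thesis using True L by (simp add: lq_norm_def rinv_def)
next
  case False
  define Q where "Q = enn2real q"
  have Q: "1 \<le> Q" using q False unfolding Q_def by (cases q rule: ennreal_cases) auto
  have epow_le: "epow (h t) Q \<le> ennreal (B powr Q) * indicator A t" for t
  proof (cases "h t = 0")
    case False
    have "h t \<noteq> \<infinity>" using hB[of t] by (auto simp: top_unique)
    moreover have "enn2real (h t) powr Q \<le> B powr Q"
      using hB[of t] B Q by (intro powr_mono2) (auto simp: enn2real_leI)
    ultimately show ?thesis using hA[OF False] by (simp add: epow_def)
  qed simp
  have "(\<integral>\<^sup>+ t. epow (h t) Q \<partial>M) \<le> (\<integral>\<^sup>+ t. ennreal (B powr Q) * indicator A t \<partial>M)"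
    by (rule nn_integral_mono) (rule epow_le)
  also have "\<dots> = ennreal (B powr Q) * emeasure M A"
    using A by (rule nn_integral_cmult_indicator)
  also have "\<dots> \<le> ennreal (B powr Q * L)"
    using L by (simp add: ennreal_mult mult_left_mono)
  finally have I: "(\<integral>\<^sup>+ t. epow (h t) Q \<partial>M) \<le> ennreal (B powr Q * L)" .
  then have fin: "(\<integral>\<^sup>+ t. epow (h t) Q \<partial>M) \<noteq> \<infinity>" by (auto simp: top_unique)
  have "lq_norm M q h = epow (\<integral>\<^sup>+ t. epow (h t) Q \<partial>M) (1 / Q)"
    using False by (simp add: lq_norm_def Q_def)
  also have "\<dots> = ennreal (enn2real (\<integral>\<^sup>+ t. epow (h t) Q \<partial>M) powr (1 / Q))"
    using fin by (simp only: epow_def if_False)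
  also have "\<dots> \<le> ennreal ((B powr Q * L) powr (1 / Q))"
    using I L Q by (intro ennreal_leI powr_mono2) (auto simp: enn2real_leI)
  also have "(B powr Q * L) powr (1 / Q) = B * L powr rinv q"
    using B L Q rinv_eq_inverse_enn2real[OF False] by (simp add: powr_mult powr_powr Q_def)
  finally show ?thesis .
qed

lemma iter_norm_eq_0_off_box:
  assumes g: "\<And>x. g x \<noteq> 0 \<Longrightarrow> \<forall>i<n. x i \<in> A i"
    and i: "k \<le> i" "i < n" "x i \<notin> A i"
  shows "iter_norm M q k g x = 0"
  using i
proof (induction k arbitrary: x)
  case 0
  then show ?case using g by auto
next
  case (Suc k)
  then have "iter_norm M q k g (x(k := t)) = 0" for t
    by (intro Suc.IH) auto
  then show ?case by simp
qed

lemma iter_norm_le_box: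
  assumes q: "\<And>i. i < n \<Longrightarrow> 1 \<le> q i" and A: "\<And>i. i < n \<Longrightarrow> A i \<in> sets M"
    and L: "\<And>i. i < n \<Longrightarrow> 0 < L i \<and> emeasure M (A i) \<le> ennreal (L i)"
    and b: "0 \<le> b" and gb: "\<And>x. g x \<le> ennreal b"
    and gA: "\<And>x. g x \<noteq> 0 \<Longrightarrow> \<forall>i<n. x i \<in> A i"
    and k: "k \<le> n"
  shows "iter_norm M q k g x \<le> ennreal (b * (\<Prod>i<k. L i powr rinv (q i)))"
  using k
proof (induction k arbitrary: x)
  case 0
  then show ?case using gb by simp
next
  case (Suc k)
  have "iter_norm M q (Suc k) g x = lq_norm M (q k) (\<lambda>t. iter_norm M q k g (x(k := t)))"
    by simp
  also have "\<dots> \<le> ennreal (b * (\<Prod>i<k. L i powr rinv (q i)) * L k powr rinv (q k))"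
  proof (rule lq_norm_le_bounded_support)
    show "1 \<le> q k" "A k \<in> sets M" "0 < L k" "emeasure M (A k) \<le> ennreal (L k)"
      using q A L Suc.prems by auto
    show "0 \<le> b * (\<Prod>i<k. L i powr rinv (q i))"
      using b by (intro mult_nonneg_nonneg prod_nonneg) auto
    show "iter_norm M q k g (x(k := t)) \<le> ennreal (b * (\<Prod>i<k. L i powr rinv (q i)))" for t
      using Suc by simp
    show "t \<in> A k" if "iter_norm M q k g (x(k := t)) \<noteq> 0" for t
      using that iter_norm_eq_0_off_box[OF gA, where k = k and i = k and x = "x(k := t)"] Suc.prems by auto
  qed
  finally show ?case by (simp add: mult.assoc)
qed

lemma mixed_Lp_enn_le_cube:
  fixes g :: "(nat \<Rightarrow> real) \<Rightarrow> ennreal"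
  assumes q: "\<And>i. i < n \<Longrightarrow> 1 \<le> q i" and \<rho>: "0 < \<rho>" and b: "0 \<le> b"
    and gb: "\<And>x. g x \<le> ennreal b"
    and gz: "\<And>x i. g x \<noteq> 0 \<Longrightarrow> i < n \<Longrightarrow> \<bar>x i - z i\<bar> \<le> \<rho>"
  shows "mixed_Lp_enn n q g \<le> ennreal (b * (2 * \<rho>) powr (\<Sum>i<n. rinv (q i)))"
proof -
  have "mixed_Lp_enn n q g \<le> ennreal (b * (\<Prod>i<n. (2 * \<rho>) powr rinv (q i)))"
    unfolding mixed_Lp_enn_def
  proof (rule iter_norm_le_box[where A = "\<lambda>i. {z i - \<rho> .. z i + \<rho>}"])
    show "\<forall>i<n. x i \<in> {z i - \<rho> .. z i + \<rho>}" if "g x \<noteq> 0" for x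
      using gz[OF that] by (simp add: abs_diff_le_iff)
  qed (use q \<rho> b gb in auto)
  also have "(\<Prod>i<n. (2 * \<rho>) powr rinv (q i)) = (2 * \<rho>) powr (\<Sum>i<n. rinv (q i))"
    using \<rho> by (simp add: powr_sum)
  finally show ?thesis .
qed

lemma mixed_Lp_norm_le_cube:
  fixes f :: "(nat \<Rightarrow> real) \<Rightarrow> complex"
  assumes q: "\<And>i. i < n \<Longrightarrow> 1 \<le> q i" and \<rho>: "0 < \<rho>"
    and fb: "\<And>x. norm (f x) \<le> b"
    and fz: "\<And>x i. f x \<noteq> 0 \<Longrightarrow> i < n \<Longrightarrow> \<bar>x i - z i\<bar> \<le> \<rho>"
  shows "mixed_Lp_norm n q f \<le> ennreal (b * (2 * \<rho>) powr (\<Sum>i<n. rinv (q i)))"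
  unfolding mixed_Lp_norm_def
proof (rule mixed_Lp_enn_le_cube[OF q \<rho>])
  show "0 \<le> b" using fb[of undefined] norm_ge_zero order_trans by blast
qed (use fb fz in \<open>auto intro: ennreal_leI\<close>)

lemma iter_norm_1_ge_box:
  fixes g :: "(nat \<Rightarrow> real) \<Rightarrow> ennreal"
  assumes A: "\<And>i. i < n \<Longrightarrow> A i \<in> sets lborel"
    and g: "\<And>x. x \<in> Rn n \<Longrightarrow> \<forall>i<n. x i \<in> A i \<Longrightarrow> c \<le> g x"
    and k: "k \<le> n" and x: "x \<in> Rn n" and xA: "\<And>i. k \<le> i \<Longrightarrow> i < n \<Longrightarrow> x i \<in> A i"
  shows "c * (\<Prod>i<k. emeasure lborel (A i)) \<le> iter_norm lborel (\<lambda>_. 1) k g x"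
  using k x xA
proof (induction k arbitrary: x)
  case 0
  then show ?case using g by simp
next
  case (Suc k)
  have IH: "c * (\<Prod>i<k. emeasure lborel (A i)) * indicator (A k) t
      \<le> iter_norm lborel (\<lambda>_. 1) k g (x(k := t))" for t
  proof (cases "t \<in> A k")
    case True
    have "x(k := t) \<in> Rn n" using Suc.prems by (auto simp: Rn_def)
    moreover have "(x(k := t)) i \<in> A i" if "k \<le> i" "i < n" for i
      using Suc.prems True that by (cases "i = k") auto
    ultimately show ?thesis using Suc.IH Suc.prems True by simp
  qed simp
  have "c * (\<Prod>i<Suc k. emeasure lborel (A i))
      = (\<integral>\<^sup>+ t. c * (\<Prod>i<k. emeasure lborel (A i)) * indicator (A k) t \<partial>lborel)"
    using A Suc.prems by (subst nn_integral_cmult_indicator) (auto simp: mult.assoc)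
  also have "\<dots> \<le> (\<integral>\<^sup>+ t. iter_norm lborel (\<lambda>_. 1) k g (x(k := t)) \<partial>lborel)"
    by (rule nn_integral_mono) (rule IH)
  also have "\<dots> = iter_norm lborel (\<lambda>_. 1) (Suc k) g x"
    by (simp add: lq_norm_1)
  finally show ?case .
qed

lemma balln_coord_dist: "x \<in> balln n y r \<Longrightarrow> i < n \<Longrightarrow> \<bar>x i - y i\<bar> < r"
proof -
  assume x: "x \<in> balln n y r" and i: "i < n"
  have "sqrt ((x i - y i)\<^sup>2) \<le> sqrt (\<Sum>j<n. (x j - y j)\<^sup>2)"
    using i by (intro real_sqrt_le_mono member_le_sum) auto
  then show ?thesis using x by (auto simp: balln_def)
qed

lemma cube_subset_balln:
  assumes n: "1 \<le> n" and r: "0 < r" and x: "x \<in> Rn n"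
    and xy: "\<And>i. i < n \<Longrightarrow> \<bar>x i - y i\<bar> < r / n"
  shows "x \<in> balln n y r"
proof -
  have "(\<Sum>j<n. (x j - y j)\<^sup>2) < (\<Sum>j<n. (r / n)\<^sup>2)"
  proof (rule sum_strict_mono)
    fix j assume "j \<in> {..<n}"
    then have "\<bar>x j - y j\<bar>\<^sup>2 < (r / n)\<^sup>2"
      using xy by (intro power_strict_mono) auto
    then show "(x j - y j)\<^sup>2 < (r / n)\<^sup>2" by simp
  qed (use n in \<open>auto simp: lessThan_empty_iff\<close>)
  also have "\<dots> = r\<^sup>2 / n" using n by (simp add: power2_eq_square)
  also have "\<dots> \<le> r\<^sup>2" using n by (simp add: divide_le_eq mult_le_cancel_left1)
  finally have "sqrt (\<Sum>j<n. (x j - y j)\<^sup>2) < sqrt (r\<^sup>2)" by (simp only: real_sqrt_less_iff)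
  then show ?thesis using x r by (simp add: balln_def)
qed

lemma scaled_mem_balln_iff:
  assumes r: "0 < r"
  shows "(\<lambda>i. x i / r) \<in> balln n (\<lambda>i. y i / r) 1 \<longleftrightarrow> x \<in> balln n y r"
proof -
  have "(\<Sum>i<n. (x i / r - y i / r)\<^sup>2) = (\<Sum>i<n. (x i - y i)\<^sup>2) / r\<^sup>2"
    by (simp add: sum_divide_distrib diff_divide_distrib[symmetric] power_divide)
  then have "sqrt (\<Sum>i<n. (x i / r - y i / r)\<^sup>2) = sqrt (\<Sum>i<n. (x i - y i)\<^sup>2) / r"
    using r by (simp add: real_sqrt_divide)
  then have "sqrt (\<Sum>i<n. (x i / r - y i / r)\<^sup>2) < 1 \<longleftrightarrow> sqrt (\<Sum>i<n. (x i - y i)\<^sup>2) < r"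
    using r by (simp add: divide_less_eq)
  moreover have "(\<lambda>i. x i / r) \<in> Rn n \<longleftrightarrow> x \<in> Rn n"
    using r by (simp add: Rn_def)
  ultimately show ?thesis by (simp add: balln_def)
qed

lemma vol_balln_finite:
  assumes r: "0 < r"
  shows "vol n (balln n y r) \<noteq> \<infinity>"
proof -
  have "vol n (balln n y r) \<le> ennreal (1 * (2 * r) powr (\<Sum>i<n. rinv 1))"
    unfolding vol_def
  proof (rule mixed_Lp_enn_le_cube[OF _ r])
    show "\<bar>x i - y i\<bar> \<le> r" if "indicator (balln n y r) x \<noteq> (0::ennreal)" "i < n" for x i
      using balln_coord_dist[of x n y r i] that by (auto simp: indicator_def split: if_splits)
  qed (auto simp: indicator_def)
  then show ?thesis by (auto simp: top_unique)
qed

lemma vol_balln_ge: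
  assumes n: "1 \<le> n" and r: "0 < r"
  shows "ennreal ((2 * r / n) ^ n) \<le> vol n (balln n y r)"
proof -
  define A where "A i = {y i - r / n <..< y i + r / n}" for i
  have "emeasure lborel (A i) = ennreal (2 * r / n)" for i
  proof -
    have "y i - r / n \<le> y i + r / n" using r by (simp add: field_simps)
    then show ?thesis by (simp add: A_def)
  qed
  then have "ennreal ((2 * r / n) ^ n) = 1 * (\<Prod>i<n. emeasure lborel (A i))"
    using r by (simp add: ennreal_power)
  also have "\<dots> \<le> vol n (balln n y r)"
    unfolding vol_def mixed_Lp_enn_def
  proof (rule iter_norm_1_ge_box)
    show "1 \<le> (indicator (balln n y r) x :: ennreal)" if "x \<in> Rn n" "\<forall>i<n. x i \<in> A i" for x
    proof -
      have "x \<in> balln n y r"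
        using that by (intro cube_subset_balln[OF n r]) (auto simp: A_def abs_less_iff)
      then show ?thesis by simp
    qed
  qed (auto simp: A_def Rn_def)
  finally show ?thesis .
qed

lemma vol_balln_powr_le:
  assumes n: "1 \<le> n" and r: "0 < r" and e: "e \<le> 0"
  shows "enn2real (vol n (balln n y r)) powr e \<le> (2 * r / n) powr (n * e)"
proof -
  have pos: "0 < (2 * r / n) ^ n" using n r by simp
  have "(2 * r / n) ^ n \<le> enn2real (vol n (balln n y r))"
  proof -
    have "enn2real (ennreal ((2 * r / n) ^ n)) \<le> enn2real (vol n (balln n y r))"
      using vol_balln_ge[OF n r, of y] vol_balln_finite[OF r, of n y]
      by (intro enn2real_mono) (auto simp: top.not_eq_extremum)
    then show ?thesis using pos by simp
  qed
  then have "enn2real (vol n (balln n y r)) powr e \<le> ((2 * r / n) ^ n) powr e"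
    using pos e by (intro powr_mono2') auto
  also have "\<dots> = (2 * r / n) powr (n * e)"
    using r n by (simp add: powr_realpow[symmetric] powr_powr)
  finally show ?thesis .
qed

lemma mixed_Lp_norm_indicator_balln_Int_le:
  assumes p: "\<And>i. i < n \<Longrightarrow> 1 \<le> p i" and r: "0 < r" and r0: "0 < r0"
  shows "mixed_Lp_norm n p (\<lambda>x. indicator (balln n x0 r0) x * indicator (balln n y r) x)
    \<le> ennreal ((2 * min r r0) powr (\<Sum>i<n. rinv (p i)))"
proof -
  define z where "z = (if r \<le> r0 then y else x0)"
  have "mixed_Lp_norm n p (\<lambda>x. indicator (balln n x0 r0) x * indicator (balln n y r) x)
    \<le> ennreal (1 * (2 * min r r0) powr (\<Sum>i<n. rinv (p i)))"
  proof (rule mixed_Lp_norm_le_cube[OF p])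
    fix x i
    assume "(indicator (balln n x0 r0) x * indicator (balln n y r) x :: complex) \<noteq> 0" "i < n"
    then have "\<bar>x i - x0 i\<bar> < r0" "\<bar>x i - y i\<bar> < r"
      by (auto intro: balln_coord_dist simp: indicator_def split: if_splits)
    then show "\<bar>x i - z i\<bar> \<le> min r r0" by (auto simp: z_def)
  qed (use r r0 in \<open>auto simp: indicator_def\<close>)
  then show ?thesis by simp
qed

lemma mixed_Lp_norm_indicator_balln_Int_eq_0:
  assumes i: "i < n" and far: "r + r0 < \<bar>y i - x0 i\<bar>"
  shows "mixed_Lp_norm n p (\<lambda>x. indicator (balln n x0 r0) x * indicator (balln n y r) x) = 0"
proof -
  have "balln n x0 r0 \<inter> balln n y r = {}"
  proof (intro equalityI subsetI)
    fix x assume "x \<in> balln n x0 r0 \<inter> balln n y r"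
    then have "\<bar>x i - x0 i\<bar> < r0" "\<bar>x i - y i\<bar> < r"
      using i by (auto intro: balln_coord_dist)
    with far show "x \<in> {}" by auto
  qed simp
  then have "(\<lambda>x. indicator (balln n x0 r0) x * indicator (balln n y r) x :: complex) = (\<lambda>_. 0)"
    by (simp flip: indicator_inter_arith)
  then show ?thesis by simp
qed

lemma powr_radius_le:
  fixes r r0 a sp ss :: real
  assumes r: "0 < r" and r0: "0 < r0" and ss: "0 \<le> ss" "ss \<le> a" and sp: "a \<le> sp"
  shows "r powr (a - sp - ss) * min r r0 powr sp * (r + r0) powr ss \<le> 2 powr ss * r0 powr a"
proof (cases "r \<le> r0")
  case True
  have "r powr (a - sp - ss) * min r r0 powr sp * (r + r0) powr ss = r powr (a - ss) * (r + r0) powr ss"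
    using True by (simp add: powr_add[symmetric])
  also have "\<dots> \<le> r0 powr (a - ss) * (2 * r0) powr ss"
    using True r ss by (intro mult_mono powr_mono2) auto
  also have "\<dots> = 2 powr ss * r0 powr a"
    using r0 by (simp add: powr_mult powr_add[symmetric])
  finally show ?thesis .
next
  case False
  then have "r powr (a - sp - ss) * min r r0 powr sp * (r + r0) powr ss
      = r powr (a - sp - ss) * r0 powr sp * (r + r0) powr ss"
    by simp
  also have "\<dots> \<le> r powr (a - sp - ss) * r0 powr sp * (2 * r) powr ss"
    using False r0 ss by (intro mult_left_mono powr_mono2) auto
  also have "\<dots> = 2 powr ss * r0 powr sp * r powr (a - sp)"
    using r by (simp add: powr_mult powr_add[symmetric])
  also have "\<dots> \<le> 2 powr ss * r0 powr sp * r0 powr (a - sp)"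
    using False r0 sp by (intro mult_left_mono powr_mono2') auto
  also have "\<dots> = 2 powr ss * r0 powr a"
    by (simp add: powr_add[symmetric])
  finally show ?thesis .
qed

lemma powr_scaled_radius_le:
  fixes r r0 N a sp ss :: real
  assumes r: "0 < r" and r0: "0 < r0" and N: "0 < N" and ss: "0 \<le> ss" "ss \<le> a" and sp: "a \<le> sp"
  shows "(2 * r / N) powr (a - sp - ss) * (2 * min r r0) powr sp * (2 * (r + r0)) powr ss
    \<le> (2 / N) powr (a - sp - ss) * 2 powr sp * 4 powr ss * r0 powr a"
proof -
  have "(2 * r / N) powr (a - sp - ss) = (2 / N) powr (a - sp - ss) * r powr (a - sp - ss)"
    using r N by (simp add: powr_mult[symmetric])
  moreover have "(2 * min r r0) powr sp = 2 powr sp * min r r0 powr sp"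
    using r r0 by (simp add: powr_mult)
  moreover have "(2 * (r + r0)) powr ss = 2 powr ss * (r + r0) powr ss"
    using r r0 by (simp only: powr_mult)
  ultimately have "(2 * r / N) powr (a - sp - ss) * (2 * min r r0) powr sp * (2 * (r + r0)) powr ss
      = (2 / N) powr (a - sp - ss) * 2 powr sp * 2 powr ss
        * (r powr (a - sp - ss) * min r r0 powr sp * (r + r0) powr ss)"
    by (simp only: mult_ac)
  also have "\<dots> \<le> (2 / N) powr (a - sp - ss) * 2 powr sp * 2 powr ss * (2 powr ss * r0 powr a)"
    using powr_radius_le[OF r r0 ss sp] by (intro mult_left_mono) auto
  also have "\<dots> = (2 / N) powr (a - sp - ss) * 2 powr sp * 4 powr ss * r0 powr a"
  proof -
    have four: "(2::real) powr ss * 2 powr ss = 4 powr ss"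
      using powr_mult[of 2 2 ss] by simp
    show ?thesis by (simp add: mult_ac flip: four)
  qed
  finally show ?thesis .
qed

lemma morrey_norm_indicator_balln_le:
  assumes n: "1 \<le> n" and p: "\<And>i. i < n \<Longrightarrow> 1 \<le> p i" and s: "\<And>i. i < n \<Longrightarrow> 1 \<le> s i"
    and r0: "0 < r0"
    and c1: "(\<Sum>i<n. rinv (s i)) / n \<le> rinv \<alpha>" and c2: "rinv \<alpha> \<le> (\<Sum>i<n. rinv (p i)) / n"
  shows "morrey_norm n p s \<alpha> (indicator (balln n x0 r0)) \<le>
    ennreal ((2 / n) powr (n * rinv \<alpha> - (\<Sum>i<n. rinv (p i)) - (\<Sum>i<n. rinv (s i)))
      * 2 powr (\<Sum>i<n. rinv (p i)) * 4 powr (\<Sum>i<n. rinv (s i)) * r0 powr (n * rinv \<alpha>))"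
proof -
  define SP where "SP = (\<Sum>i<n. rinv (p i))"
  define SS where "SS = (\<Sum>i<n. rinv (s i))"
  define a where "a = rinv \<alpha>"
  define e where "e = a - SP / n - SS / n"
  have npos: "0 < real n" using n by simp
  have SS0: "0 \<le> SS" unfolding SS_def by (intro sum_nonneg) (simp add: rinv_nonneg)
  have SS_le: "SS \<le> n * a" using c1 npos unfolding SS_def a_def by (simp add: divide_le_eq mult.commute)
  have le_SP: "n * a \<le> SP" using c2 npos unfolding SP_def a_def by (simp add: le_divide_eq mult.commute)
  have ne: "n * e = n * a - SP - SS" unfolding e_def using npos by (simp add: field_simps)
  have "n * e \<le> 0" using ne le_SP SS0 by linarith
  then have e0: "e \<le> 0" using npos by (simp add: mult_le_0_iff)
  show ?thesis
    unfolding morrey_norm_def SP_def[symmetric] SS_def[symmetric] a_def[symmetric] e_def[symmetric]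
  proof (rule SUP_least)
    fix r :: real assume "r \<in> {0<..}"
    then have r: "0 < r" by simp
    define F where "F y = ennreal (enn2real (vol n (balln n y r)) powr e)
        * mixed_Lp_norm n p (\<lambda>x. indicator (balln n x0 r0) x * indicator (balln n y r) x)" for y
    have "mixed_Lp_enn n s F
        \<le> ennreal ((2 * r / n) powr (n * e) * (2 * min r r0) powr SP * (2 * (r + r0)) powr SS)"
      unfolding SS_def
    proof (rule mixed_Lp_enn_le_cube[OF s, where z = x0])
      show "F y \<le> ennreal ((2 * r / n) powr (n * e) * (2 * min r r0) powr SP)" for y
        unfolding F_def SP_def ennreal_mult'[OF powr_ge_zero]
        using vol_balln_powr_le[OF n r e0] mixed_Lp_norm_indicator_balln_Int_le[OF p r r0]
        by (intro mult_mono) auto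
      show "\<bar>y i - x0 i\<bar> \<le> r + r0" if "F y \<noteq> 0" "i < n" for y i
        using that mixed_Lp_norm_indicator_balln_Int_eq_0[of i n r r0 y x0 p]
        by (force simp: F_def)
    qed (use r r0 in auto)
    also have "(2 * r / n) powr (n * e) * (2 * min r r0) powr SP * (2 * (r + r0)) powr SS
        \<le> (2 / n) powr (n * a - SP - SS) * 2 powr SP * 4 powr SS * r0 powr (n * a)"
      using powr_scaled_radius_le[OF r r0 npos SS0 SS_le le_SP] unfolding ne .
    finally show "mixed_Lp_enn n s F \<le> ennreal \<dots>"
      by (simp add: ennreal_leI)
  qed
qed

lemma H_norm_single_term_le:
  assumes r: "0 < r" and g: "loc_int n g" "amalgam_norm n p s g \<le> 1"
  shows "H_norm n p s a (\<lambda>x. c * St n a r g x) \<le> ennreal (norm c)"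
proof -
  define cs where "cs j = (if j = 0 then c else 0)" for j :: nat
  have "(\<lambda>j. norm (cs j)) = (\<lambda>j. if j = 0 then norm c else 0)"
    by (simp add: cs_def fun_eq_iff)
  then have sums: "(\<lambda>j. norm (cs j)) sums norm c"
    using sums_single[of 0 "\<lambda>_. norm c"] by simp
  have partial_sum: "(\<Sum>j<N. cs j * St n a r g x) = c * St n a r g x" if "1 \<le> N" for N x
  proof -
    have "(\<Sum>j<N. cs j * St n a r g x) = (\<Sum>j<N. if j = 0 then c * St n a r g x else 0)"
      by (rule sum.cong) (simp_all add: cs_def)
    also have "\<dots> = c * St n a r g x" using that by simp
    finally show ?thesis .
  qed
  then have "\<forall>\<^sub>F N in sequentially.
      mixed_Lp_norm n (\<lambda>_. 1) (\<lambda>x. ((\<Sum>j<N. cs j * St n a r g x) - c * St n a r g x)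
        * indicator (balln n y \<rho>) x) = 0" for y \<rho>
    unfolding eventually_sequentially by (intro exI[of _ 1]) (simp add: partial_sum)
  then have "l1loc_tendsto n (\<lambda>N x. \<Sum>j<N. cs j * St n a r g x) (\<lambda>x. c * St n a r g x)"
    unfolding l1loc_tendsto_def by (blast intro: tendsto_eventually)
  then have "ennreal (\<Sum>j. norm (cs j)) \<in> {ennreal (\<Sum>j. norm (c' j)) | c' r' g'.
      summable (\<lambda>j. norm (c' j))
    \<and> (\<forall>j. 0 < r' j \<and> loc_int n (g' j) \<and> amalgam_norm n p s (g' j) \<le> 1)
    \<and> l1loc_tendsto n (\<lambda>N x. \<Sum>j<N. c' j * St n a (r' j) (g' j) x) (\<lambda>x. c * St n a r g x)}"
    unfolding mem_Collect_eq
    by (intro exI[of _ cs] exI[of _ "\<lambda>_. r"] exI[of _ "\<lambda>_. g"]) (use sums_summable[OF sums] r g in simp)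
  then have "H_norm n p s a (\<lambda>x. c * St n a r g x) \<le> ennreal (\<Sum>j. norm (cs j))"
    unfolding H_norm_def by (rule Inf_lower)
  then show ?thesis using sums_unique[OF sums] by simp
qed

lemma loc_int_indicator_balln:
  assumes \<rho>: "0 < \<rho>"
  shows "loc_int n (\<lambda>x. c * indicator (balln n z \<rho>) x)"
  unfolding loc_int_def
proof (intro conjI allI)
  have "(\<lambda>x. c * indicator (balln n z \<rho>) (\<lambda>i. if i < n then x i else 0)) =
      (\<lambda>x. c * (if sqrt (\<Sum>i<n. (x i - z i)\<^sup>2) < \<rho> then 1 else 0))"
    by (auto simp: indicator_def balln_def Rn_def fun_eq_iff)
  moreover have "(\<lambda>x. c * (if sqrt (\<Sum>i<n. (x i - z i)\<^sup>2) < \<rho> then 1 else 0))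
      \<in> borel_measurable (PiM {..<n} (\<lambda>_. lborel))"
    by measurable
  ultimately show "(\<lambda>x. c * indicator (balln n z \<rho>) (\<lambda>i. if i < n then x i else 0))
      \<in> borel_measurable (PiM {..<n} (\<lambda>_. lborel))"
    by simp
next
  fix y r
  have "mixed_Lp_norm n (\<lambda>_. 1) (\<lambda>x. c * indicator (balln n z \<rho>) x * indicator (balln n y r) x)
      \<le> ennreal (norm c * (2 * \<rho>) powr (\<Sum>i<n. rinv 1))"
  proof (rule mixed_Lp_norm_le_cube[OF _ \<rho>])
    show "norm (c * indicator (balln n z \<rho>) x * indicator (balln n y r) x) \<le> norm c" for x
      by (simp add: indicator_def norm_mult)
    show "\<bar>x i - z i\<bar> \<le> \<rho>"
      if "c * indicator (balln n z \<rho>) x * indicator (balln n y r) x \<noteq> 0" "i < n" for x i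
      using that balln_coord_dist[of x n z \<rho> i] by (auto simp: indicator_def split: if_splits)
  qed simp
  then show "mixed_Lp_norm n (\<lambda>_. 1) (\<lambda>x. c * indicator (balln n z \<rho>) x * indicator (balln n y r) x)
      < \<infinity>"
    by (rule order.strict_trans1) simp
qed

lemma cube1_Int_unit_balln_coord:
  assumes "x \<in> cube1 n k" "x \<in> balln n z 1" "i < n"
  shows "k i \<in> {\<lfloor>z i\<rfloor> - 1 .. \<lfloor>z i\<rfloor> + 1}"
proof -
  have "of_int (k i) \<le> x i" "x i < of_int (k i) + 1" "\<bar>x i - z i\<bar> < 1"
    using assms balln_coord_dist by (auto simp: cube1_def)
  moreover have "of_int \<lfloor>z i\<rfloor> \<le> z i" "z i < of_int \<lfloor>z i\<rfloor> + 1"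
    by linarith+
  ultimately have "real_of_int (k i) < of_int (\<lfloor>z i\<rfloor> + 2)" "real_of_int \<lfloor>z i\<rfloor> < of_int (k i + 2)"
    unfolding abs_less_iff by simp_all linarith+
  then show ?thesis unfolding of_int_less_iff by simp
qed

lemma mixed_Lp_norm_restrict_cube1_le:
  fixes f :: "(nat \<Rightarrow> real) \<Rightarrow> complex"
  assumes p: "\<And>i. i < n \<Longrightarrow> 1 \<le> p i" and f: "\<And>x. norm (f x) \<le> b"
  shows "mixed_Lp_norm n p (\<lambda>x. f x * indicator (cube1 n k) x) \<le> ennreal b"
proof -
  have "mixed_Lp_norm n p (\<lambda>x. f x * indicator (cube1 n k) x)
      \<le> ennreal (b * (2 * (1 / 2)) powr (\<Sum>i<n. rinv (p i)))"
  proof (rule mixed_Lp_norm_le_cube[OF p, where z = "\<lambda>i. of_int (k i) + 1 / 2"])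
    show "norm (f x * indicator (cube1 n k) x) \<le> b" for x
      using f[of x] order_trans[OF norm_ge_zero f] by (simp add: indicator_def norm_mult)
    show "\<bar>x i - (of_int (k i) + 1 / 2)\<bar> \<le> 1 / 2"
      if "f x * indicator (cube1 n k) x \<noteq> 0" "i < n" for x i
    proof -
      have "x \<in> cube1 n k" using that(1) by (auto simp: indicator_def split: if_splits)
      then have "of_int (k i) \<le> x i" "x i < of_int (k i) + 1" using that(2) by (auto simp: cube1_def)
      then show ?thesis unfolding abs_le_iff by linarith
    qed
  qed simp_all
  then show ?thesis by simp
qed

lemma amalgam_norm_indicator_unit_balln_le:
  assumes p: "\<And>i. i < n \<Longrightarrow> 1 \<le> p i" and s: "\<And>i. i < n \<Longrightarrow> 1 \<le> s i"
  shows "amalgam_norm n p s (\<lambda>x. c * indicator (balln n z 1) x)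
    \<le> ennreal (norm c * (\<Prod>i<n. 3 powr rinv (s i)))"
proof -
  define A where "A k = mixed_Lp_norm n p (\<lambda>x. c * indicator (balln n z 1) x * indicator (cube1 n k) x)"
    for k
  have "iter_norm (count_space UNIV) s n A k
      \<le> ennreal (norm c * (\<Prod>i<n. 3 powr rinv (s i)))" for k
  proof (rule iter_norm_le_box[OF s, where A = "\<lambda>i. {\<lfloor>z i\<rfloor> - 1 .. \<lfloor>z i\<rfloor> + 1}"])
    show "A k \<le> ennreal (norm c)" for k
      unfolding A_def by (rule mixed_Lp_norm_restrict_cube1_le[OF p]) (auto simp: indicator_def)
    show "\<forall>i<n. k i \<in> {\<lfloor>z i\<rfloor> - 1 .. \<lfloor>z i\<rfloor> + 1}" if nz: "A k \<noteq> 0" for k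
    proof -
      obtain x where "c * indicator (balln n z 1) x * indicator (cube1 n k) x \<noteq> 0"
        using ex_neq_0_if_mixed_Lp_norm_neq_0[OF nz[unfolded A_def]] ..
      then have "x \<in> cube1 n k" "x \<in> balln n z 1"
        by (auto simp: indicator_def split: if_splits)
      then show ?thesis using cube1_Int_unit_balln_coord by blast
    qed
    show "0 < (3::real) \<and> emeasure (count_space UNIV) {\<lfloor>z i\<rfloor> - 1 .. \<lfloor>z i\<rfloor> + 1} \<le> ennreal 3"
      for i
      by (simp add: emeasure_count_space_finite)
  qed auto
  then show ?thesis
    unfolding amalgam_norm_def mixed_lseq_norm_def A_def by blast
qed

lemma St_indicator_scaled_unit_balln:
  assumes r: "0 < r"
  shows "St n a r (\<lambda>x. c * indicator (balln n (\<lambda>i. y i / r) 1) x) x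
    = complex_of_real (r powr (- (n * rinv a))) * c * indicator (balln n y r) x"
  unfolding St_def indicator_def scaled_mem_balln_iff[OF r] by (simp only: mult.assoc)

lemma H_norm_indicator_balln_le:
  assumes p: "\<And>i. i < n \<Longrightarrow> 1 \<le> p i" and s: "\<And>i. i < n \<Longrightarrow> 1 \<le> s i" and r0: "0 < r0"
  shows "H_norm n p s a (indicator (balln n x0 r0))
    \<le> ennreal ((\<Prod>i<n. 3 powr rinv (s i)) * r0 powr (n * rinv a))"
proof -
  define K where "K = (\<Prod>i<n. (3::real) powr rinv (s i))"
  have K: "0 < K" unfolding K_def by (intro prod_pos) auto
  define g where "g = (\<lambda>x. complex_of_real (1 / K) * indicator (balln n (\<lambda>i. x0 i / r0) 1) x)"
  define c where "c = complex_of_real (K * r0 powr (n * rinv a))"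
  have "c * St n a r0 g x = indicator (balln n x0 r0) x" for x
  proof -
    have "c * St n a r0 g x
        = complex_of_real (K * r0 powr (n * rinv a) * r0 powr (- (n * rinv a)) * (1 / K))
          * indicator (balln n x0 r0) x"
      unfolding g_def St_indicator_scaled_unit_balln[OF r0] c_def by (simp only: of_real_mult mult.assoc)
    also have "K * r0 powr (n * rinv a) * r0 powr (- (n * rinv a)) * (1 / K) = 1"
      using K r0 by (simp add: powr_minus)
    finally show ?thesis by simp
  qed
  then have eq: "indicator (balln n x0 r0) = (\<lambda>x. c * St n a r0 g x)"
    by auto
  have loc: "loc_int n g"
    unfolding g_def by (rule loc_int_indicator_balln) simp
  have "amalgam_norm n p s g \<le> ennreal (norm (complex_of_real (1 / K)) * K)"
    unfolding g_def K_def by (rule amalgam_norm_indicator_unit_balln_le) (simp_all add: p s)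
  also have "norm (complex_of_real (1 / K)) * K = 1" using K by (simp only: norm_of_real) simp
  finally have am: "amalgam_norm n p s g \<le> 1" by simp
  have "H_norm n p s a (\<lambda>x. c * St n a r0 g x) \<le> ennreal (norm c)"
    by (rule H_norm_single_term_le[OF r0 loc am])
  moreover have "norm c = (\<Prod>i<n. 3 powr rinv (s i)) * r0 powr (n * rinv a)"
    unfolding c_def norm_of_real K_def[symmetric] using K by (intro abs_of_nonneg) simp
  ultimately show ?thesis
    unfolding eq by (simp only:)
qed

theorem proposition7p1:
  fixes n :: nat and p s :: "nat \<Rightarrow> ennreal" and \<alpha> :: ennreal
  assumes n: "1 \<le> n"
    and p: "\<forall>i<n. 1 \<le> p i" and s: "\<forall>i<n. 1 \<le> s i"
    and \<alpha>: "0 < \<alpha>"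
    and c0: "0 \<le> (\<Sum>i<n. rinv (s i)) / n"
    and c1: "(\<Sum>i<n. rinv (s i)) / n \<le> rinv \<alpha>"
    and c2: "rinv \<alpha> \<le> (\<Sum>i<n. rinv (p i)) / n"
    and c3: "(\<Sum>i<n. rinv (p i)) / n < 1"
  shows "\<exists>C>0. \<forall>x0 \<in> Rn n. \<forall>r0>0.
     morrey_norm n p s \<alpha> (indicator (balln n x0 r0))
        \<le> ennreal (C * r0 powr (real n * rinv \<alpha>))
   \<and> H_norm n (\<lambda>i. conj_exp (p i)) (\<lambda>i. conj_exp (s i)) (conj_exp \<alpha>)
        (indicator (balln n x0 r0))
        \<le> ennreal (C * r0 powr (real n * rinv (conj_exp \<alpha>)))"
proof -
  define C\<^sub>M where "C\<^sub>M = (2 / n) powr (n * rinv \<alpha> - (\<Sum>i<n. rinv (p i)) - (\<Sum>i<n. rinv (s i)))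
    * 2 powr (\<Sum>i<n. rinv (p i)) * 4 powr (\<Sum>i<n. rinv (s i))"
  define C\<^sub>H where "C\<^sub>H = (\<Prod>i<n. (3::real) powr rinv (conj_exp (s i)))"
  have C\<^sub>M: "0 < C\<^sub>M" and C\<^sub>H: "0 < C\<^sub>H"
    using n unfolding C\<^sub>M_def C\<^sub>H_def by (auto intro: prod_pos)
  show ?thesis
  proof (intro exI[of _ "C\<^sub>M + C\<^sub>H"] conjI ballI allI impI)
    show "0 < C\<^sub>M + C\<^sub>H" using C\<^sub>M C\<^sub>H by simp
  next
    fix x0 :: "nat \<Rightarrow> real" and r0 :: real assume r0: "0 < r0"
    show "morrey_norm n p s \<alpha> (indicator (balln n x0 r0))
        \<le> ennreal ((C\<^sub>M + C\<^sub>H) * r0 powr (n * rinv \<alpha>))"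
      using morrey_norm_indicator_balln_le[OF n p[rule_format] s[rule_format] r0 c1 c2]
      unfolding C\<^sub>M_def[symmetric]
      by (rule order_trans) (use C\<^sub>H in \<open>auto intro!: ennreal_leI mult_right_mono\<close>)
    have "H_norm n (\<lambda>i. conj_exp (p i)) (\<lambda>i. conj_exp (s i)) (conj_exp \<alpha>) (indicator (balln n x0 r0))
        \<le> ennreal (C\<^sub>H * r0 powr (n * rinv (conj_exp \<alpha>)))"
      unfolding C\<^sub>H_def by (rule H_norm_indicator_balln_le[OF one_le_conj_exp one_le_conj_exp r0])
    then show "H_norm n (\<lambda>i. conj_exp (p i)) (\<lambda>i. conj_exp (s i)) (conj_exp \<alpha>) (indicator (balln n x0 r0))
        \<le> ennreal ((C\<^sub>M + C\<^sub>H) * r0 powr (n * rinv (conj_exp \<alpha>)))"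
      by (rule order_trans) (use C\<^sub>M in \<open>auto intro!: ennreal_leI mult_right_mono\<close>)
  qed
qed

end
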